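(* Let $B$ be an even unimodular lattice of rank $r$ with a fixed basis, and let $I_{1,1}$ have standard basis $x,y$ ($\langle x,x\rangle=1=-\langle y,y\rangle$, $\langle x,y\rangle=0$). Let $(\tfrac12)I_{1,1}=\{\tfrac12(p x+q y): p,q\in\mathbb{Z},\ p\equiv q \pmod 2\}$ with the form extended bilinearly from $I_{1,1}$, and regard $L=B\oplus I_{1,1}$ and $M=B\oplus(\tfrac12)I_{1,1}$ as $\mathbb{Z}$-submodules of the same rational quadratic space $(B\oplus I_{1,1})\otimes\mathbb{Q}$. Then $O(M)\cong O(L)$; the isomorphism is given by the fact that every isometry of $M$ (extended $\mathbb{Q}$-linearly) maps $L$ onto $L$, and every isometry of $L$ (extended $\mathbb{Q}$-linearly) maps $M$ onto $M$.
   Context: $O(L)$ denotes the group of isometries of a lattice (or $\mathbb{Z}$-module with a $\mathbb{Q}$-valued symmetric bilinear form) $L$ onto itself. Even: all norms $\langle\eta,\eta\rangle$ even; unimodular: Gram determinant $\pm1$. *)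

theory Defs
  imports "Jordan_Normal_Form.Determinant" "HOL-Library.FuncSet"
begin

text \<open>The lattice B is given by its Gram matrix G (an r x r integer matrix) with respect
  to the fixed basis. The ambient rational quadratic space (B + I_{1,1}) tensor Q is
  rat vectors of dimension r+2: coordinates 0..r-1 are B-coordinates, coordinate r is
  the x-coordinate and coordinate r+1 the y-coordinate.\<close>

definition even_unimodular :: "int mat \<Rightarrow> nat \<Rightarrow> bool" where
  "even_unimodular G r \<longleftrightarrow>
     G \<in> carrier_mat r r \<and> transpose_mat G = G \<and>
     (\<forall>v \<in> carrier_vec r. even (v \<bullet> (G *\<^sub>v v))) \<and>
     (det G = 1 \<or> det G = -1)"

definition gramLM :: "int mat \<Rightarrow> nat \<Rightarrow> rat mat" where
  "gramLM G r = mat (r+2) (r+2) (\<lambda>(i,j).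
      if i < r \<and> j < r then of_int (G $$ (i,j))
      else if i = j \<and> i = r then 1
      else if i = j \<and> i = r + 1 then -1
      else 0)"

definition qform :: "int mat \<Rightarrow> nat \<Rightarrow> rat vec \<Rightarrow> rat vec \<Rightarrow> rat" where
  "qform G r u v = u \<bullet> (gramLM G r *\<^sub>v v)"

definition Lset :: "nat \<Rightarrow> rat vec set" where
  "Lset r = {v \<in> carrier_vec (r+2). \<forall>i < r+2. v $ i \<in> \<int>}"

definition Mset :: "nat \<Rightarrow> rat vec set" where
  "Mset r = {v \<in> carrier_vec (r+2). (\<forall>i < r. v $ i \<in> \<int>) \<and>
     (\<exists>p q :: int. v $ r = of_int p / 2 \<and> v $ (r+1) = of_int q / 2 \<and> even (p - q))}"

definition isom_group :: "int mat \<Rightarrow> nat \<Rightarrow> rat vec set \<Rightarrow> (rat vec \<Rightarrow> rat vec) set" where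
  "isom_group G r X = {f. bij_betw f X X \<and>
      (\<forall>u\<in>X. \<forall>v\<in>X. f (u + v) = f u + f v) \<and>
      (\<forall>u\<in>X. \<forall>v\<in>X. qform G r (f u) (f v) = qform G r u v) \<and>
      f \<in> extensional X}"

definition rat_linear :: "nat \<Rightarrow> (rat vec \<Rightarrow> rat vec) \<Rightarrow> bool" where
  "rat_linear r g \<longleftrightarrow> g \<in> carrier_vec (r+2) \<rightarrow> carrier_vec (r+2) \<and>
     (\<forall>u\<in>carrier_vec (r+2). \<forall>v\<in>carrier_vec (r+2). g (u + v) = g u + g v) \<and>
     (\<forall>c. \<forall>u\<in>carrier_vec (r+2). g (c \<cdot>\<^sub>v u) = c \<cdot>\<^sub>v g u)"

end

theory Submission
  imports Defs
begin

text \<open>Both lattices contain the standard basis and L \<subseteq> M \<subseteq> (1/2) L, so an isometry of either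
  lattice is the restriction of the Q-linear map with the same values on the basis, and what has
  to be shown is that this map preserves the other lattice. For that each lattice is described
  intrinsically in terms of the other. Because B is even, a vector of M lies in L exactly when its
  norm is odd or it pairs integrally with all of M. Conversely, M is L together with the halves of
  the characteristic vectors c of L, those with <c,w> \<equiv> <w,w> mod 2 for all w \<in> L; that the
  B-part of such a c is divisible by 2 is where the unimodularity of B enters. Both descriptions
  are invariant under isometries.\<close>

lemma gramLM_carrier [simp]: "gramLM G r \<in> carrier_mat (r+2) (r+2)"
  by (simp add: gramLM_def)

lemma qform_smult_left:
  "u \<in> carrier_vec (r+2) \<Longrightarrow> w \<in> carrier_vec (r+2) \<Longrightarrow> qform G r (c \<cdot>\<^sub>v u) w = c * qform G r u w"
  unfolding qform_def by (simp add: gramLM_def)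

lemma qform_smult_right:
  assumes "u \<in> carrier_vec (r+2)" "w \<in> carrier_vec (r+2)"
  shows "qform G r w (c \<cdot>\<^sub>v u) = c * qform G r w u"
proof -
  have "gramLM G r *\<^sub>v (c \<cdot>\<^sub>v u) = c \<cdot>\<^sub>v (gramLM G r *\<^sub>v u)"
    using mult_mat_vec[OF gramLM_carrier assms(1)] .
  then show ?thesis
    unfolding qform_def using assms by (simp add: gramLM_def)
qed

definition bform :: "int mat \<Rightarrow> nat \<Rightarrow> rat vec \<Rightarrow> rat vec \<Rightarrow> rat" where
  "bform G r u v = (\<Sum>i<r. \<Sum>j<r. u$i * of_int (G$$(i,j)) * v$j)"

lemma qform_eq_bform:
  assumes "u \<in> carrier_vec (r+2)" "v \<in> carrier_vec (r+2)"
  shows "qform G r u v = bform G r u v + u$r * v$r - u$(Suc r) * v$(Suc r)"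
proof -
  let ?A = "gramLM G r"
  define F where "F i = u$i * (\<Sum>j<r+2. ?A $$ (i,j) * v$j)" for i
  have "qform G r u v = (\<Sum>i<r+2. F i)"
    unfolding qform_def scalar_prod_def F_def using assms
    by (auto simp: gramLM_def lessThan_atLeast0 scalar_prod_def mult.commute intro!: sum.cong)
  also have "\<dots> = (\<Sum>i<r. F i) + F r + F (Suc r)"
    by simp
  also have "(\<Sum>i<r. F i) = bform G r u v"
    unfolding bform_def F_def
    by (intro sum.cong) (simp_all add: gramLM_def sum_distrib_left mult.assoc)
  finally show ?thesis
    by (simp add: F_def gramLM_def)
qed

lemma bform_Ints:
  "\<forall>i<r. u$i \<in> \<int> \<Longrightarrow> \<forall>i<r. v$i \<in> \<int> \<Longrightarrow> bform G r u v \<in> \<int>"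
  unfolding bform_def by (intro Ints_sum Ints_mult) auto

lemma bform_smult_left:
  "u \<in> carrier_vec (r+2) \<Longrightarrow> bform G r (c \<cdot>\<^sub>v u) v = c * bform G r u v"
  unfolding bform_def by (simp add: sum_distrib_left mult.assoc)

lemma bform_zero_right: "\<forall>j<r. w$j = 0 \<Longrightarrow> bform G r v w = 0"
  unfolding bform_def by simp

lemma bform_self_even:
  assumes eu: "even_unimodular G r" and v: "\<forall>i<r. v$i \<in> \<int>"
  obtains k :: int where "bform G r v v = 2 * of_int k"
proof -
  have G: "G \<in> carrier_mat r r"
    using eu by (simp add: even_unimodular_def)
  define x where "x = vec r (\<lambda>i. \<lfloor>v$i\<rfloor>)"
  have x: "x \<in> carrier_vec r"
    by (simp add: x_def)
  have "even (x \<bullet> (G *\<^sub>v x))"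
    using eu x by (simp add: even_unimodular_def)
  moreover have "of_int (x \<bullet> (G *\<^sub>v x)) = bform G r v v"
    using G v by (simp add: x_def bform_def scalar_prod_def lessThan_atLeast0 sum_distrib_left
        mult.assoc mult.commute mult.left_commute)
  ultimately show ?thesis
    using that by (metis dvdE of_int_mult of_int_numeral)
qed

lemma odd_square_mod_8: "odd (p::int) \<Longrightarrow> p * p mod 8 = 1"
proof -
  assume "odd p"
  then obtain m where p: "p = 2*m + 1"
    by (metis odd_two_times_div_two_succ)
  have "even (m * (m + 1))"
    by simp
  then obtain k where "m * (m + 1) = 2 * k"
    by (rule evenE)
  then have "p * p = 8 * k + 1"
    unfolding p by (simp add: algebra_simps)
  then show ?thesis
    by simp
qed

lemma Lset_carrier: "v \<in> Lset r \<Longrightarrow> v \<in> carrier_vec (r+2)"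
  by (simp add: Lset_def)

lemma Mset_carrier: "v \<in> Mset r \<Longrightarrow> v \<in> carrier_vec (r+2)"
  by (simp add: Mset_def)

lemma LsetE:
  assumes "w \<in> Lset r"
  obtains a b :: int where "w \<in> carrier_vec (r+2)" "\<forall>i<r. w$i \<in> \<int>"
    "w$r = of_int a" "w$(Suc r) = of_int b"
proof -
  have "w$r \<in> \<int>" "w$(Suc r) \<in> \<int>"
    using assms by (auto simp: Lset_def)
  then obtain a b where "w$r = of_int a" "w$(Suc r) = of_int b"
    by (auto elim!: Ints_cases)
  then show ?thesis
    using that assms by (auto simp: Lset_def)
qed

lemma MsetE:
  assumes "v \<in> Mset r"
  obtains p q :: int where "v \<in> carrier_vec (r+2)" "\<forall>i<r. v$i \<in> \<int>"
    "v$r = of_int p / 2" "v$(Suc r) = of_int q / 2" "even (p - q)"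
  using assms unfolding Mset_def by auto

lemma unit_vec_in_Lset: "i < r+2 \<Longrightarrow> unit_vec (r+2) i \<in> Lset r"
  unfolding Lset_def by auto

lemma Lset_add: "u \<in> Lset r \<Longrightarrow> v \<in> Lset r \<Longrightarrow> u + v \<in> Lset r"
  unfolding Lset_def by auto

lemma Lset_smult_Ints: "u \<in> Lset r \<Longrightarrow> c \<in> \<int> \<Longrightarrow> c \<cdot>\<^sub>v u \<in> Lset r"
  unfolding Lset_def by auto

lemma Lset_subset_Mset: "Lset r \<subseteq> Mset r"
proof
  fix v assume v: "v \<in> Lset r"
  then obtain a b where "v$r = of_int a" "v$(Suc r) = of_int b"
    by (rule LsetE)
  then have "\<exists>p q :: int. v$r = of_int p / 2 \<and> v$(r+1) = of_int q / 2 \<and> even (p - q)"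
    by (intro exI[of _ "2*a"] exI[of _ "2*b"]) simp
  then show "v \<in> Mset r"
    using v unfolding Mset_def Lset_def by auto
qed

lemma unit_vec_in_Mset: "i < r+2 \<Longrightarrow> unit_vec (r+2) i \<in> Mset r"
  using unit_vec_in_Lset Lset_subset_Mset by blast

lemma Mset_add:
  assumes "u \<in> Mset r" "v \<in> Mset r"
  shows "u + v \<in> Mset r"
proof -
  obtain p q where u: "u \<in> carrier_vec (r+2)" "\<forall>i<r. u$i \<in> \<int>"
    "u$r = of_int p / 2" "u$(Suc r) = of_int q / 2" "even (p - q)"
    using assms(1) by (rule MsetE)
  obtain p' q' where v: "v \<in> carrier_vec (r+2)" "\<forall>i<r. v$i \<in> \<int>"
    "v$r = of_int p' / 2" "v$(Suc r) = of_int q' / 2" "even (p' - q')"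
    using assms(2) by (rule MsetE)
  have "(u+v)$r = of_int (p+p') / 2" "(u+v)$(r+1) = of_int (q+q') / 2"
    using u v by (simp_all add: add_divide_distrib)
  moreover have "even ((p+p') - (q+q'))"
    using u(5) v(5) by presburger
  ultimately have "\<exists>P Q :: int. (u+v)$r = of_int P / 2 \<and> (u+v)$(r+1) = of_int Q / 2 \<and> even (P - Q)"
    by blast
  then show ?thesis
    unfolding Mset_def using u v by auto
qed

lemma double_Mset_in_Lset: "v \<in> Mset r \<Longrightarrow> (2::rat) \<cdot>\<^sub>v v \<in> Lset r"
proof -
  assume "v \<in> Mset r"
  then obtain p q where v: "v \<in> carrier_vec (r+2)" "\<forall>i<r. v$i \<in> \<int>"
    "v$r = of_int p / 2" "v$(Suc r) = of_int q / 2"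
    by (rule MsetE)
  have "((2::rat) \<cdot>\<^sub>v v) $ i \<in> \<int>" if "i < r+2" for i
  proof -
    have "i < r \<or> i = r \<or> i = Suc r"
      using that by auto
    then show ?thesis
      using v that by (auto simp: mult.commute)
  qed
  then show ?thesis
    unfolding Lset_def using v by auto
qed

lemma Mset_in_Lset_iff:
  assumes "v \<in> Mset r" "v$r = of_int p / 2" "v$(Suc r) = of_int q / 2" "even (p - q)"
  shows "v \<in> Lset r \<longleftrightarrow> even p"
proof
  assume "v \<in> Lset r"
  then have "v$r \<in> \<int>"
    by (simp add: Lset_def)
  then have "(of_int p / of_int 2 :: rat) \<in> \<int>"
    using assms(2) by simp
  then show "even p"
    by (subst (asm) of_int_div_of_int_in_Ints_iff) auto
next
  assume "even p"
  moreover from this have "even q"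
    using assms(4) by simp
  ultimately have "v$r \<in> \<int>" "v$(Suc r) \<in> \<int>"
    using assms(2,3) by (auto elim!: evenE)
  moreover have "\<forall>i<r. v$i \<in> \<int>" "v \<in> carrier_vec (r+2)"
    using assms(1) by (auto elim: MsetE)
  ultimately show "v \<in> Lset r"
    unfolding Lset_def using less_Suc_eq by auto
qed

subsection \<open>Recovering L from M\<close>

definition odd_norm :: "int mat \<Rightarrow> nat \<Rightarrow> rat vec \<Rightarrow> bool" where
  "odd_norm G r v \<longleftrightarrow> (\<exists>k::int. qform G r v v = 2 * of_int k + 1)"

definition in_dual :: "int mat \<Rightarrow> nat \<Rightarrow> rat vec set \<Rightarrow> rat vec \<Rightarrow> bool" where
  "in_dual G r X v \<longleftrightarrow> (\<forall>w\<in>X. qform G r v w \<in> \<int>)"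

lemma Lset_odd_norm_or_in_dual:
  assumes eu: "even_unimodular G r" and "v \<in> Lset r"
  shows "odd_norm G r v \<or> in_dual G r (Mset r) v"
proof -
  obtain a b where v: "v \<in> carrier_vec (r+2)" "\<forall>i<r. v$i \<in> \<int>"
    "v$r = of_int a" "v$(Suc r) = of_int b"
    using assms(2) by (rule LsetE)
  obtain K where K: "bform G r v v = 2 * of_int K"
    using bform_self_even[OF eu v(2)] .
  show ?thesis
  proof (cases "odd (a - b)")
    case True
    have "a*a - b*b = (a - b) * (a + b)"
      by (simp add: algebra_simps)
    moreover have "odd (a + b)"
      using True by presburger
    ultimately have "odd (2*K + (a*a - b*b))"
      using True by simp
    then obtain k where k: "2*K + (a*a - b*b) = 2*k + 1"
      by (rule oddE)
    have "qform G r v v = of_int (2*K + (a*a - b*b))"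
      using qform_eq_bform[OF v(1) v(1)] K v(3,4) by simp
    then have "qform G r v v = 2 * of_int k + 1"
      unfolding k by simp
    then show ?thesis
      unfolding odd_norm_def by blast
  next
    case False
    have "qform G r v w \<in> \<int>" if wM: "w \<in> Mset r" for w
    proof -
      obtain p q where w: "w \<in> carrier_vec (r+2)" "\<forall>i<r. w$i \<in> \<int>"
        "w$r = of_int p / 2" "w$(Suc r) = of_int q / 2" "even (p - q)"
        using wM by (rule MsetE)
      have "a*p - b*q = a*(p - q) + (a - b)*q"
        by (simp add: algebra_simps)
      then have "even (a*p - b*q)"
        using w(5) False by simp
      then obtain m where m: "a*p - b*q = 2*m"
        by (rule evenE)
      have "qform G r v w = bform G r v w + of_int (a*p - b*q) / 2"
        using qform_eq_bform[OF v(1) w(1), where G=G] v(3,4) w(3,4) by (simp add: field_simps)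
      also have "\<dots> = bform G r v w + of_int m"
        unfolding m by simp
      finally show ?thesis
        using bform_Ints[OF v(2) w(2)] by simp
    qed
    then show ?thesis
      unfolding in_dual_def by blast
  qed
qed

lemma Mset_minus_Lset_not_odd_norm:
  assumes eu: "even_unimodular G r" and vM: "v \<in> Mset r" and vL: "v \<notin> Lset r"
  shows "\<not> odd_norm G r v"
proof
  obtain p q where v: "v \<in> carrier_vec (r+2)" "\<forall>i<r. v$i \<in> \<int>"
    "v$r = of_int p / 2" "v$(Suc r) = of_int q / 2" "even (p - q)"
    using vM by (rule MsetE)
  have "odd p" "odd q"
    using Mset_in_Lset_iff[OF vM v(3-5)] vL v(5) by auto
  then have squares: "p*p mod 8 = 1" "q*q mod 8 = 1"
    by (simp_all add: odd_square_mod_8)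
  obtain K where K: "bform G r v v = 2 * of_int K"
    using bform_self_even[OF eu v(2)] .
  assume "odd_norm G r v"
  then obtain k where k: "qform G r v v = 2 * of_int k + 1"
    unfolding odd_norm_def by blast
  have "qform G r v v
      = 2 * of_int K + of_int p / 2 * (of_int p / 2) - of_int q / 2 * (of_int q / 2)"
    using qform_eq_bform[OF v(1) v(1)] K v(3,4) by simp
  then have "(of_int (4 * (2*k + 1)) :: rat) = of_int (8*K + p*p - q*q)"
    using k by (simp add: field_simps)
  then have "4 * (2*k + 1) = 8*K + p*p - q*q"
    by (simp only: of_int_eq_iff)
  with squares show False
    by presburger
qed

lemma Mset_minus_Lset_not_in_dual:
  assumes vM: "v \<in> Mset r" and vL: "v \<notin> Lset r"
  shows "\<not> in_dual G r (Mset r) v"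
proof
  obtain p q where v: "v \<in> carrier_vec (r+2)"
    "v$r = of_int p / 2" "v$(Suc r) = of_int q / 2" "even (p - q)"
    using vM by (rule MsetE)
  have "odd p"
    using Mset_in_Lset_iff[OF vM v(2-4)] vL by auto
  \<comment> \<open>w1 = (x+y)/2 and w2 = (x-y)/2\<close>
  define w1 :: "rat vec" where "w1 = vec (r+2) (\<lambda>i. if i < r then 0 else 1/2)"
  define w2 :: "rat vec"
    where "w2 = vec (r+2) (\<lambda>i. if i < r then 0 else if i = r then 1/2 else -1/2)"
  have "w1 \<in> Mset r"
    unfolding Mset_def w1_def by (auto intro!: exI[of _ 1])
  moreover have "w2 \<in> Mset r"
    unfolding Mset_def w2_def by (auto intro!: exI[of _ 1] exI[of _ "-1"])
  moreover assume "in_dual G r (Mset r) v"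
  ultimately have "qform G r v w1 \<in> \<int>" "qform G r v w2 \<in> \<int>"
    unfolding in_dual_def by auto
  moreover have "qform G r v w1 = of_int (p - q) / of_int 4"
    using qform_eq_bform[of v r w1 G] v bform_zero_right[of r w1 G v]
    by (simp add: w1_def field_simps)
  moreover have "qform G r v w2 = of_int (p + q) / of_int 4"
    using qform_eq_bform[of v r w2 G] v bform_zero_right[of r w2 G v]
    by (simp add: w2_def field_simps)
  ultimately have "4 dvd (p - q)" "4 dvd (p + q)"
    using of_int_div_of_int_in_Ints_iff[of "p - q" 4, where 'a=rat]
      of_int_div_of_int_in_Ints_iff[of "p + q" 4, where 'a=rat]
    by simp_all
  with \<open>odd p\<close> show False
    by presburger
qed

lemma Lset_iff_odd_norm_or_in_dual:
  assumes "even_unimodular G r" "v \<in> Mset r"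
  shows "v \<in> Lset r \<longleftrightarrow> odd_norm G r v \<or> in_dual G r (Mset r) v"
  using Lset_odd_norm_or_in_dual Mset_minus_Lset_not_odd_norm Mset_minus_Lset_not_in_dual assms
  by blast

subsection \<open>Recovering M from L\<close>

definition characteristic :: "int mat \<Rightarrow> nat \<Rightarrow> rat vec set \<Rightarrow> rat vec \<Rightarrow> bool" where
  "characteristic G r X c \<longleftrightarrow> (\<forall>w\<in>X. \<exists>k::int. qform G r c w - qform G r w w = 2 * of_int k)"

lemma double_characteristic:
  assumes eu: "even_unimodular G r" and vM: "v \<in> Mset r" and vL: "v \<notin> Lset r"
  shows "characteristic G r (Lset r) ((2::rat) \<cdot>\<^sub>v v)"
  unfolding characteristic_def
proof
  obtain p q where v: "v \<in> carrier_vec (r+2)" "\<forall>i<r. v$i \<in> \<int>"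
    "v$r = of_int p / 2" "v$(Suc r) = of_int q / 2" "even (p - q)"
    using vM by (rule MsetE)
  have "odd p" "odd q"
    using Mset_in_Lset_iff[OF vM v(3-5)] vL v(5) by auto
  fix w assume "w \<in> Lset r"
  then obtain a b where w: "w \<in> carrier_vec (r+2)" "\<forall>i<r. w$i \<in> \<int>"
    "w$r = of_int a" "w$(Suc r) = of_int b"
    by (rule LsetE)
  obtain m where m: "bform G r v w = of_int m"
    using bform_Ints[OF v(2) w(2)] by (auto elim!: Ints_cases)
  obtain K where K: "bform G r w w = 2 * of_int K"
    using bform_self_even[OF eu w(2)] .
  have "qform G r ((2::rat) \<cdot>\<^sub>v v) w = 2 * of_int m + of_int p * of_int a - of_int q * of_int b"
    using qform_eq_bform[of "2 \<cdot>\<^sub>v v" r w G] bform_smult_left[OF v(1), of G 2 w] m v w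
    by simp
  moreover have "qform G r w w = 2 * of_int K + of_int a * of_int a - of_int b * of_int b"
    using qform_eq_bform[OF w(1) w(1)] K w by simp
  ultimately have "qform G r ((2::rat) \<cdot>\<^sub>v v) w - qform G r w w
      = of_int (2*(m - K) + a*(p - a) + b*(b - q))"
    by (simp add: algebra_simps)
  moreover have "even (a*(p - a))"
    using \<open>odd p\<close> by auto
  then obtain x where "a*(p - a) = 2*x"
    by (rule evenE)
  moreover have "even (b*(b - q))"
    using \<open>odd q\<close> by auto
  then obtain y where "b*(b - q) = 2*y"
    by (rule evenE)
  ultimately show "\<exists>k::int. qform G r ((2::rat) \<cdot>\<^sub>v v) w - qform G r w w = 2 * of_int k"
    by (intro exI[of _ "m - K + x + y"]) simp
qed

lemma odd_det_even_preimage: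
  fixes G :: "int mat"
  assumes G: "G \<in> carrier_mat n n" and det: "odd (det G)" and x: "x \<in> carrier_vec n"
    and Gx: "\<forall>i<n. even ((G *\<^sub>v x) $ i)" and j: "j < n"
  shows "even (x $ j)"
proof -
  have adj: "adj_mat G \<in> carrier_mat n n" "adj_mat G * G = det G \<cdot>\<^sub>m 1\<^sub>m n"
    using adj_mat[OF G] by auto
  have "det G * x$j = ((adj_mat G * G) *\<^sub>v x) $ j"
    using x j
    by (simp add: adj(2) scalar_prod_def mult.assoc if_distrib[of "\<lambda>a. a * _"]
        if_distrib[of "\<lambda>a. _ * a"] cong: if_cong)
  also have "\<dots> = (adj_mat G *\<^sub>v (G *\<^sub>v x)) $ j"
    using assoc_mult_mat_vec[OF adj(1) G x] by simp
  also have "\<dots> = (\<Sum>k<n. adj_mat G $$ (j,k) * (G *\<^sub>v x) $ k)"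
    using adj(1) G j by (simp add: scalar_prod_def lessThan_atLeast0)
  finally have "det G * x$j = (\<Sum>k<n. adj_mat G $$ (j,k) * (G *\<^sub>v x) $ k)" .
  moreover have "even (\<Sum>k<n. adj_mat G $$ (j,k) * (G *\<^sub>v x) $ k)"
    using Gx by (intro dvd_sum) auto
  ultimately have "even (det G * x$j)"
    by simp
  with det show ?thesis
    by simp
qed

lemma characteristic_Lset_odd_coords:
  assumes c: "c \<in> carrier_vec (r+2)" and ch: "characteristic G r (Lset r) c"
    and a: "c$r = of_int a" and b: "c$(Suc r) = of_int b"
  shows "odd a" "odd b"
proof -
  let ?x = "unit_vec (r+2) r" and ?y = "unit_vec (r+2) (Suc r)"
  have "?x \<in> Lset r" "?y \<in> Lset r"
    by (intro unit_vec_in_Lset; simp)+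
  then obtain k l :: int where "qform G r c ?x - qform G r ?x ?x = 2 * of_int k"
    and "qform G r c ?y - qform G r ?y ?y = 2 * of_int l"
    using ch unfolding characteristic_def by blast
  moreover have "qform G r c ?x = of_int a" "qform G r ?x ?x = 1"
    "qform G r c ?y = - of_int b" "qform G r ?y ?y = -1"
    using qform_eq_bform[of c r _ G] qform_eq_bform[of _ r _ G] c a b
      bform_zero_right[of r ?x G] bform_zero_right[of r ?y G]
    by simp_all
  ultimately have "(of_int a :: rat) = of_int (2*k + 1)" "(of_int b :: rat) = of_int (1 - 2*l)"
    by simp_all
  then show "odd a" "odd b"
    by (simp_all only: of_int_eq_iff) simp_all
qed

lemma qform_unit_vec_right:
  assumes G: "G \<in> carrier_mat r r" "transpose_mat G = G"
    and c: "c \<in> carrier_vec (r+2)" and i: "i < r"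
  shows "qform G r c (unit_vec (r+2) i) = (\<Sum>l<r. of_int (G $$ (i,l)) * c$l)"
proof -
  have "qform G r c (unit_vec (r+2) i) = (\<Sum>l<r. c$l * of_int (G $$ (l,i)))"
    using qform_eq_bform[OF c, of "unit_vec (r+2) i" G] i unfolding bform_def
    by (simp, intro sum.cong) (simp_all add: if_distrib[of "\<lambda>a. _ * a"] cong: if_cong)
  also have "\<dots> = (\<Sum>l<r. of_int (G $$ (i,l)) * c$l)"
  proof (intro sum.cong refl)
    fix l assume "l \<in> {..<r}"
    then have "G $$ (l,i) = transpose_mat G $$ (i,l)"
      using G(1) i by simp
    then show "c$l * of_int (G $$ (l,i)) = of_int (G $$ (i,l)) * c$l"
      using G(2) by simp
  qed
  finally show ?thesis .
qed

lemma qform_unit_vec_self: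
  "i < r \<Longrightarrow> qform G r (unit_vec (r+2) i) (unit_vec (r+2) i) = of_int (G $$ (i,i))"
  using qform_eq_bform[of "unit_vec (r+2) i" r "unit_vec (r+2) i" G]
  by (simp add: bform_def if_distrib[of "\<lambda>a. a * _"] if_distrib[of "\<lambda>a. _ * a"] cong: if_cong)

lemma even_unimodular_diag_even:
  assumes eu: "even_unimodular G r" and i: "i < r"
  shows "even (G $$ (i,i))"
proof -
  have "even (unit_vec r i \<bullet> (G *\<^sub>v unit_vec r i))" "G \<in> carrier_mat r r"
    using eu by (simp_all add: even_unimodular_def)
  then show ?thesis
    using i
    by (simp add: scalar_prod_def if_distrib[of "\<lambda>a. a * _"] if_distrib[of "\<lambda>a. _ * a"]
        cong: if_cong)
qed

lemma characteristic_Lset_even_coords: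
  assumes eu: "even_unimodular G r" and cL: "c \<in> Lset r"
    and ch: "characteristic G r (Lset r) c" and j: "j < r"
  shows "c$j / 2 \<in> \<int>"
proof -
  have G: "G \<in> carrier_mat r r" "transpose_mat G = G" "odd (det G)"
    using eu by (auto simp: even_unimodular_def)
  have c: "c \<in> carrier_vec (r+2)" "\<forall>i<r. c$i \<in> \<int>"
    using cL by (auto simp: Lset_def)
  define c' where "c' = vec r (\<lambda>i. \<lfloor>c$i\<rfloor>)"
  have c': "c' \<in> carrier_vec r" "\<And>i. i < r \<Longrightarrow> of_int (c'$i) = c$i"
    using c by (simp_all add: c'_def)
  have "even ((G *\<^sub>v c') $ i)" if i: "i < r" for i
  proof -
    let ?e = "unit_vec (r+2) i"
    obtain k where k: "qform G r c ?e - qform G r ?e ?e = 2 * of_int k"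
      using ch unit_vec_in_Lset[of i r] i unfolding characteristic_def by auto
    have "qform G r c ?e = of_int ((G *\<^sub>v c') $ i)"
      using qform_unit_vec_right[OF G(1,2) c(1) i] G(1) i c'
      by (simp add: scalar_prod_def lessThan_atLeast0)
    then have "(of_int ((G *\<^sub>v c') $ i) :: rat) = of_int (2*k + G $$ (i,i))"
      using k qform_unit_vec_self[OF i, of G] by simp
    then have "(G *\<^sub>v c') $ i = 2*k + G $$ (i,i)"
      by (simp only: of_int_eq_iff)
    then show ?thesis
      using even_unimodular_diag_even[OF eu i] by simp
  qed
  then have "even (c'$j)"
    using odd_det_even_preimage[OF G(1) G(3) c'(1)] j by blast
  then obtain t where "c'$j = 2 * t"
    by (rule evenE)
  then have "c$j / 2 = of_int t"
    using c'(2)[OF j] by simp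
  then show ?thesis
    by simp
qed

lemma characteristic_half_in_Mset:
  assumes eu: "even_unimodular G r" and cL: "c \<in> Lset r"
    and ch: "characteristic G r (Lset r) c"
  shows "(1/2::rat) \<cdot>\<^sub>v c \<in> Mset r"
proof -
  obtain a b where c: "c \<in> carrier_vec (r+2)" "c$r = of_int a" "c$(Suc r) = of_int b"
    using cL by (rule LsetE)
  have "even (a - b)"
    using characteristic_Lset_odd_coords[OF c(1) ch c(2,3)] by simp
  moreover have "\<forall>i<r. ((1/2::rat) \<cdot>\<^sub>v c) $ i \<in> \<int>"
    using characteristic_Lset_even_coords[OF eu cL ch] c(1) by simp
  ultimately show ?thesis
    unfolding Mset_def using c by auto
qed

subsection \<open>Linear extension from the standard basis\<close>

definition lin_ext :: "nat \<Rightarrow> (rat vec \<Rightarrow> rat vec) \<Rightarrow> rat vec \<Rightarrow> rat vec" where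
  "lin_ext r f v = vec (r+2) (\<lambda>k. \<Sum>i<r+2. v$i * f (unit_vec (r+2) i) $ k)"

lemma lin_ext_carrier [simp]:
  "lin_ext r f v \<in> carrier_vec (r+2)" "lin_ext r f v \<in> carrier_vec (Suc (Suc r))"
  "dim_vec (lin_ext r f v) = Suc (Suc r)"
  by (simp_all add: lin_ext_def)

lemma lin_ext_add:
  "u \<in> carrier_vec (r+2) \<Longrightarrow> v \<in> carrier_vec (r+2) \<Longrightarrow>
    lin_ext r f (u + v) = lin_ext r f u + lin_ext r f v"
  by (rule eq_vecI) (auto simp: lin_ext_def algebra_simps sum.distrib)

lemma lin_ext_smult: "u \<in> carrier_vec (r+2) \<Longrightarrow> lin_ext r f (c \<cdot>\<^sub>v u) = c \<cdot>\<^sub>v lin_ext r f u"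
  by (rule eq_vecI) (auto simp: lin_ext_def sum_distrib_left mult.assoc simp del: sum.lessThan_Suc)

lemma rat_linear_lin_ext: "rat_linear r (lin_ext r f)"
  unfolding rat_linear_def by (auto simp: lin_ext_add lin_ext_smult)

lemma lin_ext_unit_vec_index:
  assumes "i < r+2" "k < r+2"
  shows "lin_ext r f (unit_vec (r+2) i) $ k = f (unit_vec (r+2) i) $ k"
  using assms by (simp add: lin_ext_def sum.delta if_distrib[of "\<lambda>x. x * _"] cong: if_cong
      del: sum.lessThan_Suc)

lemma lin_ext_unit_vec:
  assumes "i < r+2" "f (unit_vec (r+2) i) \<in> carrier_vec (r+2)"
  shows "lin_ext r f (unit_vec (r+2) i) = f (unit_vec (r+2) i)"
  using assms lin_ext_unit_vec_index[of i r _ f] by (intro eq_vecI) auto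

lemma lin_ext_cong:
  "(\<And>i. i < r+2 \<Longrightarrow> f (unit_vec (r+2) i) = g (unit_vec (r+2) i)) \<Longrightarrow> lin_ext r f = lin_ext r g"
  unfolding lin_ext_def by (intro ext) (simp del: sum.lessThan_Suc)

lemma lin_ext_lin_ext: "lin_ext r (lin_ext r f) = lin_ext r f"
proof
  fix v
  have "(\<Sum>i<r+2. v$i * lin_ext r f (unit_vec (r+2) i) $ k)
      = (\<Sum>i<r+2. v$i * f (unit_vec (r+2) i) $ k)"
    if "k < r+2" for k
    using that lin_ext_unit_vec_index[of _ r k f] by (intro sum.cong) simp_all
  then show "lin_ext r (lin_ext r f) v = lin_ext r f v"
    unfolding lin_ext_def[of r "lin_ext r f"] by (intro eq_vecI) (simp_all add: lin_ext_def[of r f])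
qed

lemma lin_ext_restrict:
  "(\<And>i. i < r+2 \<Longrightarrow> unit_vec (r+2) i \<in> X) \<Longrightarrow> lin_ext r (restrict f X) = lin_ext r f"
  by (intro lin_ext_cong) simp

lemma additive_on_Lset_smult_nat:
  fixes f :: "rat vec \<Rightarrow> rat vec"
  assumes add: "\<forall>u\<in>Lset r. \<forall>v\<in>Lset r. f (u + v) = f u + f v"
    and fc: "\<forall>u\<in>Lset r. f u \<in> carrier_vec (r+2)" and u: "u \<in> Lset r"
  shows "f (of_nat k \<cdot>\<^sub>v u) = of_nat k \<cdot>\<^sub>v f u"
proof -
  have uc: "u \<in> carrier_vec (r+2)" and fu: "f u \<in> carrier_vec (r+2)"
    using u fc by (auto simp: Lset_def)
  have multL: "of_nat k \<cdot>\<^sub>v u \<in> Lset r" for k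
    using u by (simp add: Lset_smult_Ints)
  show ?thesis
  proof (induction k)
    case 0
    define x where "x = f (0 \<cdot>\<^sub>v u)"
    have "0 \<cdot>\<^sub>v u = 0 \<cdot>\<^sub>v u + 0 \<cdot>\<^sub>v u"
      using uc by (intro eq_vecI) auto
    then have x: "x = x + x"
      unfolding x_def using add multL[of 0] by (metis of_nat_0)
    have "x \<in> carrier_vec (r+2)"
      unfolding x_def using fc multL[of 0] by simp
    then have "x = 0 \<cdot>\<^sub>v f u"
    proof (intro eq_vecI)
      fix i assume "i < dim_vec (0 \<cdot>\<^sub>v f u)"
      then have "x $ i = x $ i + x $ i"
        using arg_cong[OF x, of "\<lambda>y. y $ i"] fu \<open>x \<in> carrier_vec (r+2)\<close> by simp
      then show "x $ i = (0 \<cdot>\<^sub>v f u) $ i"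
        using \<open>i < dim_vec (0 \<cdot>\<^sub>v f u)\<close> by simp
    qed (use fu in simp)
    then show ?case
      by (simp add: x_def)
  next
    case (Suc k)
    have "of_nat (Suc k) \<cdot>\<^sub>v u = u + of_nat k \<cdot>\<^sub>v u"
      using uc by (intro eq_vecI) (auto simp: algebra_simps)
    moreover have "of_nat (Suc k) \<cdot>\<^sub>v f u = f u + of_nat k \<cdot>\<^sub>v f u"
      using fu by (intro eq_vecI) (auto simp: algebra_simps)
    moreover have "f (u + of_nat k \<cdot>\<^sub>v u) = f u + f (of_nat k \<cdot>\<^sub>v u)"
      using add u multL[of k] by simp
    ultimately show ?case
      using Suc by simp
  qed
qed

lemma additive_on_Lset_smult_Ints:
  fixes f :: "rat vec \<Rightarrow> rat vec"
  assumes add: "\<forall>u\<in>Lset r. \<forall>v\<in>Lset r. f (u + v) = f u + f v"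
    and fc: "\<forall>u\<in>Lset r. f u \<in> carrier_vec (r+2)" and u: "u \<in> Lset r"
  shows "f (of_int m \<cdot>\<^sub>v u) = of_int m \<cdot>\<^sub>v f u"
proof (cases "m \<ge> 0")
  case True
  then show ?thesis
    using additive_on_Lset_smult_nat[OF add fc u, of "nat m"] by simp
next
  case False
  note nat = additive_on_Lset_smult_nat[OF add fc u]
  define k where "k = nat (- m)"
  have uc: "u \<in> carrier_vec (r+2)" and fu: "f u \<in> carrier_vec (r+2)"
    and multL: "\<And>c. c \<in> \<int> \<Longrightarrow> c \<cdot>\<^sub>v u \<in> Lset r"
    using u fc by (auto simp: Lset_def Lset_smult_Ints)
  have "of_int m \<cdot>\<^sub>v u + of_nat k \<cdot>\<^sub>v u = 0 \<cdot>\<^sub>v u"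
    using uc False by (intro eq_vecI) (auto simp: k_def algebra_simps)
  then have sum: "f (of_int m \<cdot>\<^sub>v u) + f (of_nat k \<cdot>\<^sub>v u) = 0 \<cdot>\<^sub>v f u"
    using add multL nat[of 0] by (metis Ints_of_int Ints_of_nat of_nat_0)
  have "f (of_int m \<cdot>\<^sub>v u) \<in> carrier_vec (r+2)"
    using fc multL by simp
  then show ?thesis
  proof (intro eq_vecI)
    fix i assume "i < dim_vec (of_int m \<cdot>\<^sub>v f u)"
    then have "i < r+2"
      using fu by simp
    then have "f (of_int m \<cdot>\<^sub>v u) $ i + of_nat k * f u $ i = 0"
      using arg_cong[OF sum, of "\<lambda>x. x $ i"] fu nat[of k] by simp
    then show "f (of_int m \<cdot>\<^sub>v u) $ i = (of_int m \<cdot>\<^sub>v f u) $ i"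
      using \<open>i < r+2\<close> fu False by (simp add: k_def algebra_simps)
  qed (use fu in simp)
qed

lemma lin_ext_eq_additive_on_Lset:
  assumes add: "\<forall>u\<in>Lset r. \<forall>v\<in>Lset r. f (u + v) = f u + f v"
    and fc: "\<forall>u\<in>Lset r. f u \<in> carrier_vec (r+2)" and vL: "v \<in> Lset r"
  shows "lin_ext r f v = f v"
proof -
  define t where "t k = vec (r+2) (\<lambda>i. if i < k then v$i else 0)" for k
  have tL: "t k \<in> Lset r" for k
    using vL by (auto simp: t_def Lset_def)
  have trunc_eq: "lin_ext r f (t k) = f (t k)" if "k \<le> r+2" for k
    using that
  proof (induction k)
    case 0
    have "t 0 = of_int 0 \<cdot>\<^sub>v v"
      using vL by (intro eq_vecI) (auto simp: t_def Lset_def)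
    then show ?case
      using additive_on_Lset_smult_Ints[OF add fc vL, of 0] lin_ext_smult[of v r f 0]
        Lset_carrier[OF vL] fc vL by (auto intro!: eq_vecI)
  next
    case (Suc k)
    let ?e = "unit_vec (r+2) k"
    have k: "k < r+2"
      using Suc.prems by simp
    obtain m where m: "v$k = of_int m"
      using vL k unfolding Lset_def by (auto elim!: Ints_cases)
    have eL: "?e \<in> Lset r"
      using k by (rule unit_vec_in_Lset)
    have t: "t (Suc k) = t k + of_int m \<cdot>\<^sub>v ?e"
      using m k by (intro eq_vecI) (auto simp: t_def less_Suc_eq unit_vec_def)
    have "f (t (Suc k)) = f (t k) + of_int m \<cdot>\<^sub>v f ?e"
      unfolding t using add tL eL Lset_smult_Ints additive_on_Lset_smult_Ints[OF add fc eL]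
      by simp
    also have "\<dots> = lin_ext r f (t k) + of_int m \<cdot>\<^sub>v lin_ext r f ?e"
      using Suc lin_ext_unit_vec[OF k] fc eL by simp
    also have "\<dots> = lin_ext r f (t (Suc k))"
      unfolding t by (simp add: lin_ext_add lin_ext_smult t_def)
    finally show ?case
      by simp
  qed
  moreover have "t (r+2) = v"
    using Lset_carrier[OF vL] by (auto simp: t_def)
  ultimately show ?thesis
    using trunc_eq[of "r+2"] by simp
qed

lemma lin_ext_eq_additive_on_Mset:
  assumes add: "\<forall>u\<in>Mset r. \<forall>v\<in>Mset r. f (u + v) = f u + f v"
    and fc: "\<forall>u\<in>Mset r. f u \<in> carrier_vec (r+2)" and vM: "v \<in> Mset r"
  shows "lin_ext r f v = f v"
proof -
  have v: "v \<in> carrier_vec (r+2)"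
    using vM by (rule Mset_carrier)
  have double: "(2::rat) \<cdot>\<^sub>v v = v + v"
    using v by (intro eq_vecI) auto
  have "(2::rat) \<cdot>\<^sub>v lin_ext r f v = lin_ext r f ((2::rat) \<cdot>\<^sub>v v)"
    using v by (simp add: lin_ext_smult)
  also have "\<dots> = f ((2::rat) \<cdot>\<^sub>v v)"
    using lin_ext_eq_additive_on_Lset[of r f] add fc Lset_subset_Mset double_Mset_in_Lset[OF vM]
    by blast
  also have "\<dots> = (2::rat) \<cdot>\<^sub>v f v"
    using add vM fc unfolding double by (intro eq_vecI) auto
  finally have "(1/2::rat) \<cdot>\<^sub>v ((2::rat) \<cdot>\<^sub>v lin_ext r f v) = (1/2::rat) \<cdot>\<^sub>v ((2::rat) \<cdot>\<^sub>v f v)"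
    by simp
  then show ?thesis
    by (simp add: smult_smult_assoc)
qed

subsection \<open>Transport of isometries\<close>

lemma isom_groupD:
  assumes "f \<in> isom_group G r X"
  shows "bij_betw f X X" "\<And>u v. u \<in> X \<Longrightarrow> v \<in> X \<Longrightarrow> f (u + v) = f u + f v"
    "\<And>u v. u \<in> X \<Longrightarrow> v \<in> X \<Longrightarrow> qform G r (f u) (f v) = qform G r u v"
    "f \<in> extensional X"
  using assms unfolding isom_group_def by auto

lemma restrict_in_isom_group:
  assumes "bij_betw g X X" "\<And>u v. u \<in> X \<Longrightarrow> v \<in> X \<Longrightarrow> u + v \<in> X"
    "\<And>u v. u \<in> X \<Longrightarrow> v \<in> X \<Longrightarrow> g (u + v) = g u + g v"
    "\<And>u v. u \<in> X \<Longrightarrow> v \<in> X \<Longrightarrow> qform G r (g u) (g v) = qform G r u v"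
  shows "restrict g X \<in> isom_group G r X"
  unfolding isom_group_def using assms bij_betw_cong[of X "restrict g X" g] by simp

lemma isom_group_compose:
  assumes "f \<in> isom_group G r X" "h \<in> isom_group G r X"
    and closed: "\<And>u v. u \<in> X \<Longrightarrow> v \<in> X \<Longrightarrow> u + v \<in> X"
  shows "compose X f h \<in> isom_group G r X"
proof -
  note f = isom_groupD[OF assms(1)] and h = isom_groupD[OF assms(2)]
  have hX: "h u \<in> X" if "u \<in> X" for u
    using bij_betw_apply[OF h(1) that] .
  have "restrict (f \<circ> h) X \<in> isom_group G r X"
    using bij_betw_trans[OF h(1) f(1)] closed
    by (intro restrict_in_isom_group) (simp_all add: f h hX)
  then show ?thesis
    by (simp add: compose_def o_def)
qed

lemma isom_group_lin_ext_Lset: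
  "F \<in> isom_group G r (Lset r) \<Longrightarrow> v \<in> Lset r \<Longrightarrow> lin_ext r F v = F v"
  using lin_ext_eq_additive_on_Lset[of r F] isom_groupD(1,2)[of F G r "Lset r"]
    bij_betw_apply Lset_carrier by metis

lemma isom_group_lin_ext_Mset:
  "f \<in> isom_group G r (Mset r) \<Longrightarrow> v \<in> Mset r \<Longrightarrow> lin_ext r f v = f v"
  using lin_ext_eq_additive_on_Mset[of r f] isom_groupD(1,2)[of f G r "Mset r"]
    bij_betw_apply Mset_carrier by metis

lemma isom_group_odd_norm_iff:
  "f \<in> isom_group G r X \<Longrightarrow> v \<in> X \<Longrightarrow> odd_norm G r (f v) \<longleftrightarrow> odd_norm G r v"
  unfolding odd_norm_def by (simp add: isom_groupD(3))

lemma isom_group_in_dual_iff: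
  assumes f: "f \<in> isom_group G r X" and v: "v \<in> X"
  shows "in_dual G r X (f v) \<longleftrightarrow> in_dual G r X v"
proof -
  have "f ` X = X"
    using isom_groupD(1)[OF f] by (simp add: bij_betw_def)
  then have "in_dual G r X (f v) \<longleftrightarrow> (\<forall>w\<in>f ` X. qform G r (f v) w \<in> \<int>)"
    unfolding in_dual_def by simp
  also have "\<dots> \<longleftrightarrow> in_dual G r X v"
    unfolding in_dual_def using isom_groupD(3)[OF f] v by simp
  finally show ?thesis .
qed

lemma isom_group_characteristic_iff:
  assumes f: "f \<in> isom_group G r X" and c: "c \<in> X"
  shows "characteristic G r X (f c) \<longleftrightarrow> characteristic G r X c"
proof -
  have "f ` X = X"
    using isom_groupD(1)[OF f] by (simp add: bij_betw_def)
  then have "characteristic G r X (f c) \<longleftrightarrow>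
      (\<forall>w\<in>f ` X. \<exists>k::int. qform G r (f c) w - qform G r w w = 2 * of_int k)"
    unfolding characteristic_def by simp
  also have "\<dots> \<longleftrightarrow> characteristic G r X c"
    unfolding characteristic_def using isom_groupD(3)[OF f] c by simp
  finally show ?thesis .
qed

lemma isom_Mset_image_Lset:
  assumes eu: "even_unimodular G r" and f: "f \<in> isom_group G r (Mset r)"
  shows "f ` Lset r = Lset r"
proof -
  have fM: "f ` Mset r = Mset r"
    using isom_groupD(1)[OF f] by (simp add: bij_betw_def)
  have L_iff: "f v \<in> Lset r \<longleftrightarrow> v \<in> Lset r" if "v \<in> Mset r" for v
    using Lset_iff_odd_norm_or_in_dual[OF eu] that fM isom_group_odd_norm_iff[OF f that]
      isom_group_in_dual_iff[OF f that] by blast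
  show ?thesis
  proof
    show "f ` Lset r \<subseteq> Lset r"
      using L_iff Lset_subset_Mset by blast
    show "Lset r \<subseteq> f ` Lset r"
    proof
      fix u assume u: "u \<in> Lset r"
      then obtain v where "v \<in> Mset r" "u = f v"
        using fM Lset_subset_Mset by blast
      then show "u \<in> f ` Lset r"
        using L_iff u by blast
    qed
  qed
qed

lemma lin_ext_isom_Mset_image_Lset:
  "even_unimodular G r \<Longrightarrow> f \<in> isom_group G r (Mset r) \<Longrightarrow> lin_ext r f ` Lset r = Lset r"
  using isom_Mset_image_Lset isom_group_lin_ext_Mset Lset_subset_Mset
  by (metis (no_types, lifting) image_cong subsetD)

lemma restrict_lin_ext_isom_Mset_in_isom_Lset:
  assumes eu: "even_unimodular G r" and f: "f \<in> isom_group G r (Mset r)"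
  shows "restrict (lin_ext r f) (Lset r) \<in> isom_group G r (Lset r)"
proof -
  have "restrict (lin_ext r f) (Lset r) = restrict f (Lset r)"
    using isom_group_lin_ext_Mset[OF f] Lset_subset_Mset by (auto intro: restrict_ext)
  moreover have "bij_betw f (Lset r) (Lset r)"
    using isom_Mset_image_Lset[OF eu f] inj_on_subset[OF _ Lset_subset_Mset]
      bij_betw_imp_inj_on[OF isom_groupD(1)[OF f]] by (simp add: bij_betw_def)
  then have "restrict f (Lset r) \<in> isom_group G r (Lset r)"
    using subsetD[OF Lset_subset_Mset] isom_groupD(2,3)[OF f]
    by (intro restrict_in_isom_group) (simp_all add: Lset_add)
  ultimately show ?thesis
    by simp
qed

lemma lin_ext_isom_Lset_on_Mset:
  assumes F: "F \<in> isom_group G r (Lset r)" and v: "v \<in> Mset r"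
  shows "lin_ext r F v = (1/2::rat) \<cdot>\<^sub>v F ((2::rat) \<cdot>\<^sub>v v)"
proof -
  have "lin_ext r F v = lin_ext r F ((1/2::rat) \<cdot>\<^sub>v ((2::rat) \<cdot>\<^sub>v v))"
    by (simp add: smult_smult_assoc)
  also have "\<dots> = (1/2::rat) \<cdot>\<^sub>v F ((2::rat) \<cdot>\<^sub>v v)"
    using lin_ext_smult Mset_carrier[OF v] isom_group_lin_ext_Lset[OF F double_Mset_in_Lset[OF v]]
    by simp
  finally show ?thesis .
qed

lemma lin_ext_isom_Lset_image_Mset:
  assumes eu: "even_unimodular G r" and F: "F \<in> isom_group G r (Lset r)"
  shows "lin_ext r F ` Mset r = Mset r"
proof
  have FL: "F ` Lset r = Lset r"
    using isom_groupD(1)[OF F] by (simp add: bij_betw_def)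
  note char_iff = isom_group_characteristic_iff[OF F]
  show "lin_ext r F ` Mset r \<subseteq> Mset r"
  proof clarify
    fix v assume v: "v \<in> Mset r"
    show "lin_ext r F v \<in> Mset r"
    proof (cases "v \<in> Lset r")
      case True
      then show ?thesis
        using isom_group_lin_ext_Lset[OF F] FL Lset_subset_Mset by auto
    next
      case False
      let ?c = "(2::rat) \<cdot>\<^sub>v v"
      have "?c \<in> Lset r" "characteristic G r (Lset r) ?c"
        using double_Mset_in_Lset[OF v] double_characteristic[OF eu v False] by simp_all
      then have "(1/2::rat) \<cdot>\<^sub>v F ?c \<in> Mset r"
        using char_iff FL by (intro characteristic_half_in_Mset[OF eu]) auto
      then show ?thesis
        using lin_ext_isom_Lset_on_Mset[OF F v] by simp
    qed
  qed
  show "Mset r \<subseteq> lin_ext r F ` Mset r"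
  proof
    fix u assume u: "u \<in> Mset r"
    show "u \<in> lin_ext r F ` Mset r"
    proof (cases "u \<in> Lset r")
      case True
      then obtain v where "v \<in> Lset r" "u = F v"
        using FL by blast
      then show ?thesis
        using isom_group_lin_ext_Lset[OF F] Lset_subset_Mset by (metis image_eqI subsetD)
    next
      case False
      have "(2::rat) \<cdot>\<^sub>v u \<in> Lset r"
        using double_Mset_in_Lset[OF u] .
      then obtain c where c: "c \<in> Lset r" "F c = (2::rat) \<cdot>\<^sub>v u"
        using FL by (metis imageE)
      have "characteristic G r (Lset r) (F c)"
        using c(2) double_characteristic[OF eu u False] by simp
      then have "characteristic G r (Lset r) c"
        using char_iff[OF c(1)] by simp
      then have half: "(1/2::rat) \<cdot>\<^sub>v c \<in> Mset r"
        using characteristic_half_in_Mset[OF eu c(1)] by simp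
      have "lin_ext r F ((1/2::rat) \<cdot>\<^sub>v c) = (1/2::rat) \<cdot>\<^sub>v F c"
        using lin_ext_smult[OF Lset_carrier[OF c(1)]] isom_group_lin_ext_Lset[OF F c(1)] by simp
      also have "\<dots> = u"
        using c(2) by (simp add: smult_smult_assoc)
      finally show ?thesis
        using half by (metis image_eqI)
    qed
  qed
qed

lemma restrict_lin_ext_isom_Lset_in_isom_Mset:
  assumes eu: "even_unimodular G r" and F: "F \<in> isom_group G r (Lset r)"
  shows "restrict (lin_ext r F) (Mset r) \<in> isom_group G r (Mset r)"
proof (rule restrict_in_isom_group)
  note halve = lin_ext_isom_Lset_on_Mset[OF F]
  have "inj_on (lin_ext r F) (Mset r)"
  proof (rule inj_onI)
    fix u v assume u: "u \<in> Mset r" and v: "v \<in> Mset r" and eq: "lin_ext r F u = lin_ext r F v"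
    have "F ((2::rat) \<cdot>\<^sub>v u) = F ((2::rat) \<cdot>\<^sub>v v)"
      using arg_cong[OF eq, of "\<lambda>x. (2::rat) \<cdot>\<^sub>v x"] halve[OF u] halve[OF v]
      by (simp add: smult_smult_assoc)
    then have "(2::rat) \<cdot>\<^sub>v u = (2::rat) \<cdot>\<^sub>v v"
      using inj_onD[OF bij_betw_imp_inj_on[OF isom_groupD(1)[OF F]]]
        double_Mset_in_Lset[OF u] double_Mset_in_Lset[OF v] by blast
    then have "(1/2::rat) \<cdot>\<^sub>v ((2::rat) \<cdot>\<^sub>v u) = (1/2::rat) \<cdot>\<^sub>v ((2::rat) \<cdot>\<^sub>v v)"
      by simp
    then show "u = v"
      by (simp add: smult_smult_assoc)
  qed
  then show "bij_betw (lin_ext r F) (Mset r) (Mset r)"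
    using lin_ext_isom_Lset_image_Mset[OF eu F] by (simp add: bij_betw_def)
  show "u + v \<in> Mset r" if "u \<in> Mset r" "v \<in> Mset r" for u v
    using Mset_add that .
  show "lin_ext r F (u + v) = lin_ext r F u + lin_ext r F v" if "u \<in> Mset r" "v \<in> Mset r" for u v
    using lin_ext_add Mset_carrier that by blast
  show "qform G r (lin_ext r F u) (lin_ext r F v) = qform G r u v"
    if u: "u \<in> Mset r" and v: "v \<in> Mset r" for u v
  proof -
    have c: "u \<in> carrier_vec (r+2)" "v \<in> carrier_vec (r+2)"
      "F ((2::rat) \<cdot>\<^sub>v u) \<in> carrier_vec (r+2)" "F ((2::rat) \<cdot>\<^sub>v v) \<in> carrier_vec (r+2)"
      using u v Mset_carrier Lset_carrier double_Mset_in_Lset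
        bij_betw_apply[OF isom_groupD(1)[OF F]] by blast+
    have "qform G r (lin_ext r F u) (lin_ext r F v)
        = 1/4 * qform G r (F ((2::rat) \<cdot>\<^sub>v u)) (F ((2::rat) \<cdot>\<^sub>v v))"
      using c by (simp add: halve u v qform_smult_left qform_smult_right)
    also have "\<dots> = 1/4 * qform G r ((2::rat) \<cdot>\<^sub>v u) ((2::rat) \<cdot>\<^sub>v v)"
      using isom_groupD(3)[OF F] double_Mset_in_Lset u v by simp
    also have "\<dots> = qform G r u v"
      using c by (simp add: qform_smult_left qform_smult_right)
    finally show ?thesis .
  qed
qed

lemma bij_betw_isom_Mset_isom_Lset:
  assumes eu: "even_unimodular G r"
  shows "bij_betw (\<lambda>f. restrict (lin_ext r f) (Lset r))
           (isom_group G r (Mset r)) (isom_group G r (Lset r))"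
proof (rule bij_betw_imageI)
  have lin_ext_restrict_Lset: "lin_ext r (restrict (lin_ext r f) (Lset r)) = lin_ext r f" for f
    using lin_ext_restrict[of r "Lset r", OF unit_vec_in_Lset] by (simp add: lin_ext_lin_ext)
  show "inj_on (\<lambda>f. restrict (lin_ext r f) (Lset r)) (isom_group G r (Mset r))"
  proof (rule inj_onI)
    fix f h assume f: "f \<in> isom_group G r (Mset r)" and h: "h \<in> isom_group G r (Mset r)"
      and eq: "restrict (lin_ext r f) (Lset r) = restrict (lin_ext r h) (Lset r)"
    have "lin_ext r f = lin_ext r h"
      using arg_cong[OF eq, of "lin_ext r"] by (simp add: lin_ext_restrict_Lset)
    then show "f = h"
      using isom_group_lin_ext_Mset[OF f] isom_group_lin_ext_Mset[OF h]
      by (intro extensionalityI[OF isom_groupD(4)[OF f] isom_groupD(4)[OF h]]) metis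
  qed
  show "(\<lambda>f. restrict (lin_ext r f) (Lset r)) ` isom_group G r (Mset r) = isom_group G r (Lset r)"
  proof
    show "(\<lambda>f. restrict (lin_ext r f) (Lset r)) ` isom_group G r (Mset r) \<subseteq> isom_group G r (Lset r)"
      using restrict_lin_ext_isom_Mset_in_isom_Lset[OF eu] by blast
    show "isom_group G r (Lset r) \<subseteq> (\<lambda>f. restrict (lin_ext r f) (Lset r)) ` isom_group G r (Mset r)"
    proof
      fix F assume F: "F \<in> isom_group G r (Lset r)"
      let ?f = "restrict (lin_ext r F) (Mset r)"
      have "lin_ext r ?f = lin_ext r F"
        using lin_ext_restrict[of r "Mset r", OF unit_vec_in_Mset] by (simp add: lin_ext_lin_ext)
      then have "restrict (lin_ext r ?f) (Lset r) = F"
        using isom_group_lin_ext_Lset[OF F]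
        by (intro extensionalityI[OF restrict_extensional isom_groupD(4)[OF F]]) simp
      moreover have "?f \<in> isom_group G r (Mset r)"
        using restrict_lin_ext_isom_Lset_in_isom_Mset[OF eu F] .
      ultimately show "F \<in> (\<lambda>f. restrict (lin_ext r f) (Lset r)) ` isom_group G r (Mset r)"
        by (metis image_eqI)
    qed
  qed
qed

lemma restrict_lin_ext_compose:
  assumes eu: "even_unimodular G r"
    and f: "f \<in> isom_group G r (Mset r)" and h: "h \<in> isom_group G r (Mset r)"
  shows "restrict (lin_ext r (compose (Mset r) f h)) (Lset r)
       = compose (Lset r) (restrict (lin_ext r f) (Lset r)) (restrict (lin_ext r h) (Lset r))"
proof (rule extensionalityI[OF restrict_extensional compose_extensional])
  fix x assume x: "x \<in> Lset r"
  then have xM: "x \<in> Mset r" and hxL: "h x \<in> Lset r"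
    using Lset_subset_Mset isom_Mset_image_Lset[OF eu h] by blast+
  have "lin_ext r (compose (Mset r) f h) x = f (h x)"
    using isom_group_lin_ext_Mset[OF isom_group_compose[OF f h Mset_add] xM] xM
    by (simp add: compose_def)
  moreover have "lin_ext r f (lin_ext r h x) = f (h x)"
    using isom_group_lin_ext_Mset[OF h xM] isom_group_lin_ext_Mset[OF f] hxL Lset_subset_Mset
    by auto
  ultimately show "restrict (lin_ext r (compose (Mset r) f h)) (Lset r) x
      = compose (Lset r) (restrict (lin_ext r f) (Lset r)) (restrict (lin_ext r h) (Lset r)) x"
    using x hxL isom_group_lin_ext_Mset[OF h xM] by (simp add: compose_def)
qed

lemma isom_Mset_extends:
  assumes "even_unimodular G r" "f \<in> isom_group G r (Mset r)"
  shows "\<exists>g. rat_linear r g \<and> (\<forall>v \<in> Mset r. g v = f v) \<and>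
    g ` Lset r = Lset r \<and> restrict g (Lset r) \<in> isom_group G r (Lset r)"
  using rat_linear_lin_ext isom_group_lin_ext_Mset[OF assms(2)]
    lin_ext_isom_Mset_image_Lset[OF assms] restrict_lin_ext_isom_Mset_in_isom_Lset[OF assms]
  by blast

lemma isom_Lset_extends:
  assumes "even_unimodular G r" "F \<in> isom_group G r (Lset r)"
  shows "\<exists>g. rat_linear r g \<and> (\<forall>v \<in> Lset r. g v = F v) \<and>
    g ` Mset r = Mset r \<and> restrict g (Mset r) \<in> isom_group G r (Mset r)"
  using rat_linear_lin_ext isom_group_lin_ext_Lset[OF assms(2)]
    lin_ext_isom_Lset_image_Mset[OF assms] restrict_lin_ext_isom_Lset_in_isom_Mset[OF assms]
  by blast

lemma isom_Mset_iso_isom_Lset: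
  assumes "even_unimodular G r"
  shows "\<exists>\<phi>. bij_betw \<phi> (isom_group G r (Mset r)) (isom_group G r (Lset r)) \<and>
    (\<forall>f \<in> isom_group G r (Mset r). \<exists>g. rat_linear r g \<and> (\<forall>v \<in> Mset r. g v = f v) \<and>
       \<phi> f = restrict g (Lset r)) \<and>
    (\<forall>f \<in> isom_group G r (Mset r). \<forall>h \<in> isom_group G r (Mset r).
       \<phi> (compose (Mset r) f h) = compose (Lset r) (\<phi> f) (\<phi> h))"
proof (intro exI[of _ "\<lambda>f. restrict (lin_ext r f) (Lset r)"] conjI ballI)
  show "bij_betw (\<lambda>f. restrict (lin_ext r f) (Lset r))
      (isom_group G r (Mset r)) (isom_group G r (Lset r))"
    using bij_betw_isom_Mset_isom_Lset[OF assms] .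
  show "\<exists>g. rat_linear r g \<and> (\<forall>v \<in> Mset r. g v = f v) \<and>
      restrict (lin_ext r f) (Lset r) = restrict g (Lset r)"
    if "f \<in> isom_group G r (Mset r)" for f
    using rat_linear_lin_ext isom_group_lin_ext_Mset[OF that] by blast
  show "restrict (lin_ext r (compose (Mset r) f h)) (Lset r)
      = compose (Lset r) (restrict (lin_ext r f) (Lset r)) (restrict (lin_ext r h) (Lset r))"
    if "f \<in> isom_group G r (Mset r)" "h \<in> isom_group G r (Mset r)" for f h
    using restrict_lin_ext_compose[OF assms that] .
qed

theorem mainTheorem3:
  fixes G :: "int mat" and r :: nat
  assumes "even_unimodular G r"
  shows "(\<forall>f \<in> isom_group G r (Mset r). \<exists>g. rat_linear r g \<and> (\<forall>v \<in> Mset r. g v = f v) \<and>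
            g ` Lset r = Lset r \<and> restrict g (Lset r) \<in> isom_group G r (Lset r))
       \<and> (\<forall>f \<in> isom_group G r (Lset r). \<exists>g. rat_linear r g \<and> (\<forall>v \<in> Lset r. g v = f v) \<and>
            g ` Mset r = Mset r \<and> restrict g (Mset r) \<in> isom_group G r (Mset r))
       \<and> (\<exists>\<phi>. bij_betw \<phi> (isom_group G r (Mset r)) (isom_group G r (Lset r)) \<and>
            (\<forall>f \<in> isom_group G r (Mset r). \<exists>g. rat_linear r g \<and> (\<forall>v \<in> Mset r. g v = f v) \<and>
               \<phi> f = restrict g (Lset r)) \<and>
            (\<forall>f \<in> isom_group G r (Mset r). \<forall>h \<in> isom_group G r (Mset r).
               \<phi> (compose (Mset r) f h) = compose (Lset r) (\<phi> f) (\<phi> h)))"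
  using isom_Mset_extends[OF assms] isom_Lset_extends[OF assms] isom_Mset_iso_isom_Lset[OF assms]
  by blast

end
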